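(* Let $\Sigma$ be a finite alphabet, $\lambda\in[0,1)$, and let $L=\mathcal{L}^{>\lambda}(\mathcal{A}|\mathrm{D})$ for some quantum automaton $\mathcal{A}$ over $\Sigma$. Then: (1) For any $w\in\Sigma^+$, $u\in\Sigma^*$ and $v\in\Sigma^\omega$, if $uv\in L$ then there are infinitely many positive integers $k$ such that $uw^kv\in L$. (2) For any $v\in L$, there are infinitely many finite prefixes $v_n$ of $v$ such that $v_nw^\omega\in L$ for all $w\in\Sigma^+$. (3) For any positive integer $n$, each $w\in L$ can be written as $w=xyz$ with $x,y\in\Sigma^*$, $z\in\Sigma^\omega$, such that $|x|\ge n$, $|y|\ge1$, and $xy^kz\in L$ for all $k\in\mathbb{N}$.
   Context: A quantum automaton is a tuple $\mathcal{A}=(\mathcal{H},|s_0\rangle,\Sigma,\{U_\sigma:\sigma\in\Sigma\},F)$ where $\mathcal{H}$ is a finite-dimensional complex Hilbert space, $|s_0\rangle$ a unit vector, $\Sigma$ a finite alphabet, each $U_\sigma$ unitary, and $F$ a subspace. For $w=\sigma_1\sigma_2\cdots\in\Sigma^\omega$, a unit vector $|\psi\rangle\in F$ and checkpoints $0\le n_1<n_2<\cdots$, the disturbing run is $|s_0\rangle$ (initial state) and for $n\ge1$: $|s_n\rangle=U_{\sigma_n}|\psi\rangle$ if $n-1=n_i$ for some $i$, else $|s_n\rangle=U_{\sigma_n}|s_{n-1}\rangle$. Then $f^{\mathrm{D}}_{\mathcal{A}}(w)=\sup_{|\psi\rangle}\sup_{\{n_i\}}\inf_{i\ge1}|\langle\psi|s_{n_i}\rangle|^2$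 (sup over unit $|\psi\rangle\in F$ and strictly increasing checkpoint sequences), and $\mathcal{L}^{>\lambda}(\mathcal{A}|\mathrm{D})=\{w\in\Sigma^\omega: f^{\mathrm{D}}_{\mathcal{A}}(w)>\lambda\}$. $|x|$ is the length of a finite word $x$. *)

theory Defs
  imports "HOL-Analysis.Analysis" "HOL-Library.Omega_Words_Fun"
begin

record ('a, 'n) qaut =
  qa_init :: "complex ^ 'n"
  qa_trans :: "'a \<Rightarrow> complex ^ 'n ^ 'n"
  qa_acc :: "(complex ^ 'n) set"

definition cinner :: "complex ^ 'n::finite \<Rightarrow> complex ^ 'n \<Rightarrow> complex" where
  "cinner x y = (\<Sum>i\<in>UNIV. cnj (x $ i) * y $ i)"

definition adjoint_mat :: "complex ^ 'n::finite ^ 'n \<Rightarrow> complex ^ 'n ^ 'n" where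
  "adjoint_mat U = (\<chi> i j. cnj (U $ j $ i))"

definition unitary_mat :: "complex ^ 'n::finite ^ 'n \<Rightarrow> bool" where
  "unitary_mat U \<longleftrightarrow> U ** adjoint_mat U = mat 1 \<and> adjoint_mat U ** U = mat 1"

definition csubspace :: "(complex ^ 'n::finite) set \<Rightarrow> bool" where
  "csubspace F \<longleftrightarrow> 0 \<in> F \<and> (\<forall>x\<in>F. \<forall>y\<in>F. x + y \<in> F) \<and> (\<forall>c x. x \<in> F \<longrightarrow> c *s x \<in> F)"

definition qaut_wf :: "('a, 'n::finite) qaut \<Rightarrow> bool" where
  "qaut_wf A \<longleftrightarrow> norm (qa_init A) = 1 \<and> (\<forall>a. unitary_mat (qa_trans A a)) \<and> csubspace (qa_acc A)"

text \<open>Disturbing run: state s_m for m \<ge> 0; the checkpoint sequence c enumerates n_1 < n_2 < ...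
  (c 0 = n_1). Letter sigma_{m+1} is w m.\<close>
fun drun :: "('a, 'n::finite) qaut \<Rightarrow> 'a word \<Rightarrow> complex ^ 'n \<Rightarrow> (nat \<Rightarrow> nat) \<Rightarrow> nat \<Rightarrow> complex ^ 'n" where
  "drun A w \<psi> c 0 = qa_init A"
| "drun A w \<psi> c (Suc m) = qa_trans A (w m) *v (if m \<in> range c then \<psi> else drun A w \<psi> c m)"

definition fD :: "('a, 'n::finite) qaut \<Rightarrow> 'a word \<Rightarrow> ereal" where
  "fD A w = (SUP \<psi>\<in>{\<psi>. \<psi> \<in> qa_acc A \<and> norm \<psi> = 1}. SUP c\<in>{c::nat\<Rightarrow>nat. strict_mono c}.
      INF i. ereal ((cmod (cinner \<psi> (drun A w \<psi> c (c i))))\<^sup>2))"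

definition langD :: "('a, 'n::finite) qaut \<Rightarrow> real \<Rightarrow> 'a word set" where
  "langD A lam = {w. fD A w > ereal lam}"

end

theory Submission
  imports Defs
begin

(* A word is accepted iff it splits at the checkpoints into blocks x_0 x_1 x_2 ..., all but x_0
   nonempty, such that for some unit vector psi in F and some mu > lambda, every block maps the
   state it starts from (the initial state for x_0, psi for the others, since the run restarts at
   psi after each checkpoint) to a state of fidelity at least mu with psi.  Part (3) repeats or
   deletes one block, which leaves all fidelities unchanged.  Parts (1) and (2) rely on
   recurrence: the orbit of y under a unitary U is bounded, so U^k y returns arbitrarily close
   to y for arbitrarily large k.  Inserting w^k into the block containing position |u|, or
   appending blocks w^k after a checkpoint, therefore lowers each fidelity by at most
   2 |U^k y - y|. *)

lemma cinner_self: "cinner x x = of_real ((norm x)\<^sup>2)"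
proof -
  have "cinner x x = (\<Sum>i\<in>UNIV. of_real ((cmod (x $ i))\<^sup>2))"
    unfolding cinner_def by (intro sum.cong refl) (metis complex_norm_square mult.commute)
  also have "\<dots> = of_real (\<Sum>i\<in>UNIV. (cmod (x $ i))\<^sup>2)"
    by simp
  also have "(\<Sum>i\<in>UNIV. (cmod (x $ i))\<^sup>2) = (norm x)\<^sup>2"
    unfolding norm_vec_def L2_set_def by (simp add: sum_nonneg)
  finally show ?thesis .
qed

lemma norm_cinner_le: "cmod (cinner x y) \<le> norm x * norm y"
proof -
  have "cmod (cinner x y) \<le> (\<Sum>i\<in>UNIV. \<bar>cmod (x $ i)\<bar> * \<bar>cmod (y $ i)\<bar>)"
    unfolding cinner_def by (rule order_trans[OF norm_sum]) (simp add: norm_mult)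
  also have "\<dots> \<le> L2_set (\<lambda>i. cmod (x $ i)) UNIV * L2_set (\<lambda>i. cmod (y $ i)) UNIV"
    by (rule L2_set_mult_ineq)
  finally show ?thesis by (simp add: norm_vec_def)
qed

lemma cinner_diff_right: "cinner x (y - z) = cinner x y - cinner x z"
  unfolding cinner_def by (simp add: algebra_simps sum_subtractf)

lemma cinner_matrix_vector_mult_left: "cinner (M *v x) y = cinner x (adjoint_mat M *v y)"
proof -
  have "cinner (M *v x) y = (\<Sum>i\<in>UNIV. \<Sum>j\<in>UNIV. cnj (M $ i $ j) * cnj (x $ j) * y $ i)"
    unfolding cinner_def matrix_vector_mult_def by (simp add: sum_distrib_right)
  also have "\<dots> = (\<Sum>j\<in>UNIV. \<Sum>i\<in>UNIV. cnj (M $ i $ j) * cnj (x $ j) * y $ i)"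
    by (rule sum.swap)
  also have "\<dots> = cinner x (adjoint_mat M *v y)"
    unfolding cinner_def matrix_vector_mult_def adjoint_mat_def
    by (simp add: sum_distrib_left mult_ac)
  finally show ?thesis .
qed

lemma unitary_mat_norm_preserving:
  assumes "unitary_mat U"
  shows "norm (U *v x) = norm x"
proof -
  have "adjoint_mat U ** U = mat 1"
    using assms unitary_mat_def by blast
  then have "cinner (U *v x) (U *v x) = cinner x x"
    by (simp add: cinner_matrix_vector_mult_left matrix_vector_mul_assoc)
  then have "(norm (U *v x))\<^sup>2 = (norm x)\<^sup>2"
    unfolding cinner_self of_real_eq_iff .
  then show ?thesis
    by (simp add: power2_eq_iff_nonneg)
qed

definition fidelity :: "complex ^ 'n::finite \<Rightarrow> complex ^ 'n \<Rightarrow> real" where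
  "fidelity \<psi> x = (cmod (cinner \<psi> x))\<^sup>2"

lemma fidelity_self: "norm \<psi> = 1 \<Longrightarrow> fidelity \<psi> \<psi> = 1"
  by (simp add: fidelity_def cinner_self)

lemma abs_fidelity_diff_le:
  assumes "norm \<psi> = 1" "norm x \<le> 1" "norm y \<le> 1"
  shows "\<bar>fidelity \<psi> x - fidelity \<psi> y\<bar> \<le> 2 * dist x y"
proof -
  define a b where "a = cmod (cinner \<psi> x)" and "b = cmod (cinner \<psi> y)"
  have "a \<le> 1" "b \<le> 1"
    using norm_cinner_le[of \<psi> x] norm_cinner_le[of \<psi> y] assms
    unfolding a_def b_def by (auto intro: order_trans)
  have "\<bar>a - b\<bar> \<le> cmod (cinner \<psi> x - cinner \<psi> y)"
    unfolding a_def b_def by (rule norm_triangle_ineq3)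
  also have "\<dots> \<le> dist x y"
    using norm_cinner_le[of \<psi> "x - y"] assms by (simp add: cinner_diff_right dist_norm)
  finally have "\<bar>a - b\<bar> \<le> dist x y" .
  have "a\<^sup>2 - b\<^sup>2 = (a - b) * (a + b)"
    by (simp add: power2_eq_square algebra_simps)
  then have "\<bar>a\<^sup>2 - b\<^sup>2\<bar> = \<bar>a - b\<bar> * (a + b)"
    by (simp add: abs_mult a_def b_def)
  also have "\<dots> \<le> dist x y * 2"
    using \<open>\<bar>a - b\<bar> \<le> dist x y\<close> \<open>a \<le> 1\<close> \<open>b \<le> 1\<close>
    by (intro mult_mono) (auto simp: a_def b_def)
  finally have "\<bar>a\<^sup>2 - b\<^sup>2\<bar> \<le> dist x y * 2" .
  then show ?thesis
    by (simp add: fidelity_def a_def b_def mult.commute)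
qed

lemma fidelity_ge_one_minus_dist:
  assumes "norm \<psi> = 1" and "norm x \<le> 1"
  shows "1 - 2 * dist x \<psi> \<le> fidelity \<psi> x"
  using abs_fidelity_diff_le[OF assms(1,2), of \<psi>] fidelity_self[OF assms(1)] assms(1)
  by (simp add: abs_le_iff)

lemma funpow_isometry:
  fixes T :: "'a::metric_space \<Rightarrow> 'a"
  assumes "\<And>x y. dist (T x) (T y) = dist x y"
  shows "dist ((T ^^ n) x) ((T ^^ n) y) = dist x y"
  by (induction n) (simp_all add: assms)

lemma isometry_orbit_recurrent:
  fixes T :: "'a::heine_borel \<Rightarrow> 'a"
  assumes isometry: "\<And>x y. dist (T x) (T y) = dist x y"
    and bounded: "bounded (range (\<lambda>k. (T ^^ k) y))" and "0 < \<epsilon>"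
  shows "\<exists>k>N. dist ((T ^^ k) y) y < \<epsilon>"
proof -
  obtain l r where "strict_mono r" and "((\<lambda>k. (T ^^ k) y) \<circ> r) \<longlonglongrightarrow> l"
    using bounded_imp_convergent_subsequence[OF bounded] by blast
  then have "Cauchy (\<lambda>i. (T ^^ r i) y)"
    by (auto dest: LIMSEQ_imp_Cauchy simp: comp_def)
  then obtain M where M: "\<And>m n. M \<le> m \<Longrightarrow> M \<le> n \<Longrightarrow> dist ((T ^^ r m) y) ((T ^^ r n) y) < \<epsilon>"
    using \<open>0 < \<epsilon>\<close> unfolding Cauchy_def by meson
  define n where "n = r M + N + 1"
  have "M \<le> r M" "n \<le> r n"
    using strict_mono_imp_increasing[OF \<open>strict_mono r\<close>] by auto
  then have "M \<le> n" and gap: "N < r n - r M"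
    unfolding n_def by linarith+
  have "(T ^^ r n) y = (T ^^ r M) ((T ^^ (r n - r M)) y)"
    using gap by (simp flip: funpow_add[THEN fun_cong, unfolded comp_def])
  then have "dist ((T ^^ (r n - r M)) y) y = dist ((T ^^ r n) y) ((T ^^ r M) y)"
    by (simp add: funpow_isometry[OF isometry])
  also have "\<dots> < \<epsilon>"
    using M[OF \<open>M \<le> n\<close> order_refl] .
  finally show ?thesis
    using gap by blast
qed

fun word_mat :: "('a, 'n::finite) qaut \<Rightarrow> 'a list \<Rightarrow> complex ^ 'n ^ 'n" where
  "word_mat A [] = mat 1"
| "word_mat A (a # xs) = word_mat A xs ** qa_trans A a"

lemma word_mat_append: "word_mat A (xs @ ys) = word_mat A ys ** word_mat A xs"
  by (induction xs) (simp_all add: matrix_mul_assoc)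

lemma word_mat_replicate:
  "word_mat A (concat (replicate k w)) *v x = ((*v) (word_mat A w) ^^ k) x"
  by (induction k arbitrary: x) (simp_all add: word_mat_append funpow_swap1 flip: matrix_vector_mul_assoc)

lemma norm_word_mat:
  assumes "qaut_wf A"
  shows "norm (word_mat A xs *v x) = norm x"
  using assms
  by (induction xs arbitrary: x)
    (simp_all add: qaut_wf_def unitary_mat_norm_preserving flip: matrix_vector_mul_assoc)

lemma dist_word_mat:
  assumes "qaut_wf A"
  shows "dist (word_mat A xs *v x) (word_mat A xs *v y) = dist x y"
  by (simp add: dist_norm norm_word_mat[OF assms] flip: matrix_vector_mult_diff_distrib)

lemma word_mat_power_recurrent:
  assumes "qaut_wf A" and "0 < \<epsilon>"
  shows "\<exists>k>N. dist (word_mat A (concat (replicate k w)) *v y) y < \<epsilon>"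
proof -
  have "bounded (range (\<lambda>k. ((*v) (word_mat A w) ^^ k) y))"
    unfolding bounded_iff
    by (auto simp: norm_word_mat[OF assms(1)] simp flip: word_mat_replicate)
  with isometry_orbit_recurrent[OF dist_word_mat[OF assms(1)] _ assms(2)]
  show ?thesis
    by (simp add: word_mat_replicate)
qed

lemma drun_segment:
  assumes "a < b" and "\<And>t. a < t \<Longrightarrow> t < b \<Longrightarrow> t \<notin> range c"
  shows "drun A f \<psi> c b = word_mat A (f[a \<rightarrow> b]) *v (if a \<in> range c then \<psi> else drun A f \<psi> c a)"
  using assms
proof (induction b)
  case (Suc b)
  show ?case
  proof (cases "b = a")
    case False
    then have "b \<notin> range c" and "a < b"
      using Suc.prems by auto
    with Suc show ?thesis
      by (simp add: word_mat_append matrix_vector_mul_assoc)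
  qed simp
qed simp

definition factorizes :: "'a word \<Rightarrow> (nat \<Rightarrow> 'a list) \<Rightarrow> bool" where
  "factorizes f B \<longleftrightarrow> (\<forall>j>0. B j \<noteq> []) \<and> (\<forall>n. \<exists>g. f = concat (map B [0..<n]) \<frown> g)"

lemma concat_map_upt_add:
  "concat (map B [0..<m + n]) = concat (map B [0..<m]) @ concat (map (\<lambda>j. B (m + j)) [0..<n])"
  by (induction n) simp_all

lemma factorizes_conc_iff:
  assumes "\<And>j. 0 < j \<Longrightarrow> j \<le> m \<Longrightarrow> B j \<noteq> []"
  shows "factorizes (concat (map B [0..<m]) \<frown> g) B \<longleftrightarrow> factorizes g (\<lambda>j. B (m + j))"
proof -
  let ?X = "concat (map B [0..<m])" and ?Y = "\<lambda>n. concat (map (\<lambda>j. B (m + j)) [0..<n])"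
  have nonempty: "(\<forall>j>0. B j \<noteq> []) \<longleftrightarrow> (\<forall>j>0. B (m + j) \<noteq> [])"
  proof (intro iffI allI impI)
    fix j :: nat
    assume "\<forall>j>0. B (m + j) \<noteq> []" and "0 < j"
    then show "B j \<noteq> []"
      using assms[of j] by (cases "j \<le> m") (auto dest: spec[of _ "j - m"])
  qed simp
  have "(\<exists>h. ?X \<frown> g = concat (map B [0..<n]) \<frown> h)" if g: "\<forall>n. \<exists>h. g = ?Y n \<frown> h" for n
  proof (cases "n \<le> m")
    case True
    then have "?X = concat (map B [0..<n]) @ concat (map B [n..<m])"
      using upt_add_eq_append[of 0 n "m - n"] by simp
    then show ?thesis
      by (intro exI[of _ "concat (map B [n..<m]) \<frown> g"]) simp
  next
    case False
    then obtain h where "g = ?Y (n - m) \<frown> h"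
      using g by blast
    then show ?thesis
      using False concat_map_upt_add[of B m "n - m"] by auto
  qed
  moreover have "\<exists>h. g = ?Y n \<frown> h" if "\<forall>n. \<exists>h. ?X \<frown> g = concat (map B [0..<n]) \<frown> h" for n
    using that[rule_format, of "m + n"]
    by (auto simp: concat_map_upt_add simp del: conc_conc simp add: conc_conc[symmetric])
  ultimately show ?thesis
    unfolding factorizes_def nonempty by blast
qed

lemma factorizes_drop_blocks:
  assumes "factorizes f B"
  obtains g where "f = concat (map B [0..<m]) \<frown> g" and "factorizes g (\<lambda>j. B (m + j))"
proof -
  obtain g where "f = concat (map B [0..<m]) \<frown> g"
    using assms unfolding factorizes_def by blast
  moreover have "B j \<noteq> []" if "0 < j" for j
    using assms that unfolding factorizes_def by blast
  ultimately show ?thesis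
    using that assms factorizes_conc_iff[of m B g] by blast
qed

lemma length_concat_blocks:
  assumes "factorizes f B"
  shows "n \<le> length (concat (map B [0..<Suc n]))"
proof (induction n)
  case (Suc n)
  have "B (Suc n) \<noteq> []"
    using assms unfolding factorizes_def by blast
  then have "0 < length (B (Suc n))"
    by simp
  moreover have "length (concat (map B [0..<Suc (Suc n)]))
      = length (concat (map B [0..<Suc n])) + length (B (Suc n))"
    by simp
  ultimately show ?case
    using Suc.IH by linarith
qed simp

lemma factorizes_subsequence:
  assumes "factorizes f B"
  shows "f[length (concat (map B [0..<j])) \<rightarrow> length (concat (map B [0..<Suc j]))] = B j"
proof -
  let ?X = "concat (map B [0..<j])"
  obtain g where "f = concat (map B [0..<Suc j]) \<frown> g"
    using assms unfolding factorizes_def by blast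
  then have f: "f = (?X @ B j) \<frown> g"
    by simp
  have "prefix (length ?X) f @ f[length ?X \<rightarrow> length ?X + length (B j)]
      = prefix (length ?X + length (B j)) f"
    by (rule subsequence_append[symmetric])
  also have "\<dots> = ?X @ B j"
    unfolding f length_append[symmetric] by (rule prefix_conc_length)
  finally show ?thesis
    unfolding f by simp
qed

lemma factorizes_split_at:
  assumes "factorizes f B"
  obtains j p q g where "B j = p @ q" and "length (concat (map B [0..<j]) @ p) = n"
    and "f = (concat (map B [0..<j]) @ p) \<frown> (q \<frown> g)" and "factorizes g (\<lambda>i. B (Suc j + i))"
proof -
  define start where "start j = length (concat (map B [0..<j]))" for j
  have "\<exists>j. n < start (Suc j)"
    using length_concat_blocks[OF assms, of "Suc n"] unfolding start_def by (metis Suc_le_lessD)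
  define j where "j = (LEAST j. n < start (Suc j))"
  have "n < start (Suc j)"
    unfolding j_def using LeastI_ex[OF \<open>\<exists>j. n < start (Suc j)\<close>] .
  have "start j \<le> n"
  proof (cases j)
    case (Suc i)
    then show ?thesis
      using not_less_Least[of i "\<lambda>j. n < start (Suc j)"] unfolding j_def by (auto simp: not_less)
  qed (simp add: start_def)
  define p q where "p = take (n - start j) (B j)" and "q = drop (n - start j) (B j)"
  obtain g where "f = concat (map B [0..<Suc j]) \<frown> g" and "factorizes g (\<lambda>i. B (Suc j + i))"
    using factorizes_drop_blocks[OF assms] by blast
  moreover have "B j = p @ q" and "length (concat (map B [0..<j]) @ p) = n"
    using \<open>n < start (Suc j)\<close> \<open>start j \<le> n\<close> by (simp_all add: p_def q_def start_def)
  ultimately show ?thesis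
    using that by simp
qed

lemma conc_replicate_fixpoint: "xs \<frown> g = g \<Longrightarrow> concat (replicate n xs) \<frown> g = g"
  by (induction n) (simp_all del: conc_conc add: conc_conc[symmetric])

lemma factorizes_iter:
  assumes "w \<noteq> []" and "0 < k"
  shows "factorizes (w\<^sup>\<omega>) (\<lambda>_. concat (replicate k w))"
proof -
  have "concat (replicate k w) \<frown> w\<^sup>\<omega> = w\<^sup>\<omega>"
    using assms(1) iter_unroll[of w] by (intro conc_replicate_fixpoint) simp
  then have "concat (map (\<lambda>_. concat (replicate k w)) [0..<n]) \<frown> w\<^sup>\<omega> = w\<^sup>\<omega>" for n
    by (simp add: map_replicate_const conc_replicate_fixpoint)
  moreover have "concat (replicate k w) \<noteq> []"
    using assms by (cases k) auto
  ultimately show ?thesis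
    unfolding factorizes_def by (auto intro: exI[of _ "w\<^sup>\<omega>"])
qed

definition cut_block :: "'a word \<Rightarrow> (nat \<Rightarrow> nat) \<Rightarrow> nat \<Rightarrow> 'a list" where
  "cut_block f c j = f[(case j of 0 \<Rightarrow> 0 | Suc i \<Rightarrow> c i) \<rightarrow> c j]"

definition block_fidelity :: "('a, 'n::finite) qaut \<Rightarrow> complex ^ 'n \<Rightarrow> (nat \<Rightarrow> 'a list) \<Rightarrow> nat \<Rightarrow> real" where
  "block_fidelity A \<psi> B j = fidelity \<psi> (word_mat A (B j) *v (if j = 0 then qa_init A else \<psi>))"

lemma drun_checkpoint:
  assumes "strict_mono c"
  shows "drun A f \<psi> c (c j) = word_mat A (cut_block f c j) *v (if j = 0 then qa_init A else \<psi>)"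
proof (cases j)
  case 0
  show ?thesis
  proof (cases "c 0 = 0")
    case False
    have "t \<notin> range c" if "t < c 0" for t
      using that strict_mono_less_eq[OF assms] by (auto simp: not_le[symmetric])
    with False show ?thesis
      using drun_segment[of 0 "c 0" c A f \<psi>] 0 by (simp add: cut_block_def)
  qed (simp add: 0 cut_block_def)
next
  case (Suc i)
  have "t \<notin> range c" if "c i < t" "t < c (Suc i)" for t
    using that strict_mono_less[OF assms] by (auto simp: less_Suc_eq_le not_le[symmetric])
  then show ?thesis
    using drun_segment[of "c i" "c (Suc i)" c A f \<psi>] strict_mono_less[OF assms] Suc
    by (simp add: cut_block_def)
qed

lemma factorizes_cut_block:
  assumes "strict_mono c"
  shows "factorizes f (cut_block f c)"
proof -
  define start where "start j = (case j of 0 \<Rightarrow> 0 | Suc i \<Rightarrow> c i)" for j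
  have "start j \<le> c j" for j
    using strict_mono_less_eq[OF assms] by (cases j) (simp_all add: start_def)
  moreover have "prefix i f @ f[i \<rightarrow> j] = prefix j f" if "i \<le> j" for i j
    using subsequence_append[of f i "j - i"] that by simp
  ultimately have "concat (map (cut_block f c) [0..<n]) = prefix (start n) f" for n
    by (induction n) (simp_all add: cut_block_def start_def)
  then have "f = concat (map (cut_block f c) [0..<n]) \<frown> suffix (start n) f" for n
    by (simp flip: prefix_suffix)
  moreover have "cut_block f c j \<noteq> []" if "0 < j" for j
    using that strict_mono_less[OF assms] by (cases j) (simp_all add: cut_block_def not_le)
  ultimately show ?thesis
    unfolding factorizes_def by blast
qed

lemma cut_block_factorization:
  assumes "factorizes f B"
  defines "c \<equiv> \<lambda>j. length (concat (map B [0..<Suc j]))"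
  shows "strict_mono c" and "cut_block f c = B"
proof -
  have "B (Suc j) \<noteq> []" for j
    using assms(1) unfolding factorizes_def by blast
  then show "strict_mono c"
    unfolding strict_mono_Suc_iff c_def by simp
  show "cut_block f c = B"
  proof
    fix j
    show "cut_block f c j = B j"
      using factorizes_subsequence[OF assms(1), of j]
      by (cases j) (simp_all add: cut_block_def c_def add.assoc)
  qed
qed

lemma ereal_less_INF_iff: "ereal a < (INF i. ereal (x i)) \<longleftrightarrow> (\<exists>\<mu>>a. \<forall>i. \<mu> \<le> x i)"
proof
  assume "ereal a < (INF i. ereal (x i))"
  then obtain \<mu> where "ereal a < ereal \<mu>" and "ereal \<mu> < (INF i. ereal (x i))"
    using ereal_dense2 by blast
  moreover have "ereal \<mu> \<le> ereal (x i)" for i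
    using \<open>ereal \<mu> < (INF i. ereal (x i))\<close> INF_lower[of i UNIV] by (meson UNIV_I less_imp_le order_trans)
  ultimately show "\<exists>\<mu>>a. \<forall>i. \<mu> \<le> x i"
    by auto
next
  assume "\<exists>\<mu>>a. \<forall>i. \<mu> \<le> x i"
  then obtain \<mu> where "a < \<mu>" and "\<forall>i. \<mu> \<le> x i"
    by blast
  then have "ereal \<mu> \<le> (INF i. ereal (x i))"
    by (intro INF_greatest) simp
  moreover have "ereal a < ereal \<mu>"
    using \<open>a < \<mu>\<close> by simp
  ultimately show "ereal a < (INF i. ereal (x i))"
    by (meson less_le_trans)
qed

lemma langD_iff_checkpoints:
  "f \<in> langD A lam \<longleftrightarrow> (\<exists>\<psi> c \<mu>. \<psi> \<in> qa_acc A \<and> norm \<psi> = 1 \<and> strict_mono c \<and> lam < \<mu>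
      \<and> (\<forall>j. \<mu> \<le> block_fidelity A \<psi> (cut_block f c) j))"
  unfolding langD_def fD_def less_SUP_iff ereal_less_INF_iff
  by (auto simp: drun_checkpoint block_fidelity_def fidelity_def)

lemma langD_iff_factorization:
  "f \<in> langD A lam \<longleftrightarrow> (\<exists>\<psi> B \<mu>. \<psi> \<in> qa_acc A \<and> norm \<psi> = 1 \<and> factorizes f B \<and> lam < \<mu>
      \<and> (\<forall>j. \<mu> \<le> block_fidelity A \<psi> B j))"
  unfolding langD_iff_checkpoints
  by (metis factorizes_cut_block cut_block_factorization)

lemma block_fidelity_insert:
  assumes "qaut_wf A" and "norm \<psi> = 1" and "B j = p @ q"
  defines "y \<equiv> word_mat A p *v (if j = 0 then qa_init A else \<psi>)"
  shows "block_fidelity A \<psi> B j - 2 * dist (word_mat A xs *v y) y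
    \<le> block_fidelity A \<psi> (B(j := p @ xs @ q)) j"
proof -
  have "norm y = 1"
    using assms(1,2) by (simp add: y_def norm_word_mat qaut_wf_def)
  have "block_fidelity A \<psi> (B(j := p @ xs @ q)) j = fidelity \<psi> (word_mat A q *v (word_mat A xs *v y))"
    by (simp add: block_fidelity_def y_def word_mat_append matrix_vector_mul_assoc matrix_mul_assoc)
  moreover have "block_fidelity A \<psi> B j = fidelity \<psi> (word_mat A q *v y)"
    by (simp add: block_fidelity_def assms(3) y_def word_mat_append matrix_vector_mul_assoc)
  moreover have "\<bar>fidelity \<psi> (word_mat A q *v (word_mat A xs *v y)) - fidelity \<psi> (word_mat A q *v y)\<bar>
      \<le> 2 * dist (word_mat A q *v (word_mat A xs *v y)) (word_mat A q *v y)"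
    by (rule abs_fidelity_diff_le) (simp_all add: assms(2) \<open>norm y = 1\<close> norm_word_mat[OF assms(1)])
  ultimately show ?thesis
    by (simp add: dist_word_mat[OF assms(1)])
qed

lemma factorizes_repeat_block:
  fixes k :: nat
  assumes "factorizes (concat (map B [0..<Suc m]) \<frown> z) B" and "0 < m"
  defines "\<sigma> \<equiv> \<lambda>j. if j < m then j else if j < m + k then m else j + 1 - k"
  shows "factorizes ((concat (map B [0..<m]) @ concat (replicate k (B m))) \<frown> z) (B \<circ> \<sigma>)"
proof -
  have nonempty: "B j \<noteq> []" if "0 < j" for j
    using assms(1) that unfolding factorizes_def by blast
  have "map (B \<circ> \<sigma>) [0..<m] = map B [0..<m]"
    by (simp add: \<sigma>_def)
  moreover have "map (\<lambda>j. (B \<circ> \<sigma>) (m + j)) [0..<k] = replicate k (B m)"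
    by (rule nth_equalityI) (simp_all add: \<sigma>_def)
  ultimately have "concat (map (B \<circ> \<sigma>) [0..<m + k]) = concat (map B [0..<m]) @ concat (replicate k (B m))"
    by (simp only: concat_map_upt_add)
  moreover have "(\<lambda>j. (B \<circ> \<sigma>) (m + k + j)) = (\<lambda>j. B (Suc m + j))"
    by (simp add: \<sigma>_def)
  moreover have "factorizes z (\<lambda>j. B (Suc m + j))"
    using assms(1) factorizes_conc_iff[of "Suc m" B z] nonempty by blast
  moreover have "(B \<circ> \<sigma>) j \<noteq> []" if "0 < j" for j
    using that \<open>0 < m\<close> nonempty by (simp add: \<sigma>_def)
  ultimately show ?thesis
    using factorizes_conc_iff[of "m + k" "B \<circ> \<sigma>" z] by simp
qed

lemma factorizes_conc_iter:
  assumes "factorizes v B" and "w \<noteq> []" and "0 < k"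
  shows "factorizes (concat (map B [0..<i]) \<frown> w\<^sup>\<omega>) (\<lambda>j. if j < i then B j else concat (replicate k w))"
    (is "factorizes _ ?B")
proof -
  have "concat (replicate k w) \<noteq> []"
    using assms(2,3) by (cases k) auto
  then have "?B j \<noteq> []" if "0 < j" for j
    using assms(1) that unfolding factorizes_def by auto
  moreover have "factorizes (w\<^sup>\<omega>) (\<lambda>j. ?B (i + j))"
    using factorizes_iter[OF assms(2,3)] by simp
  ultimately have "factorizes (concat (map ?B [0..<i]) \<frown> w\<^sup>\<omega>) ?B"
    using factorizes_conc_iff[of i ?B "w\<^sup>\<omega>"] by blast
  moreover have "map ?B [0..<i] = map B [0..<i]"
    by simp
  ultimately show ?thesis
    by metis
qed

lemma factorizes_insert:
  assumes "factorizes ((concat (map B [0..<j]) @ p) \<frown> (q \<frown> g)) B" and "B j = p @ q"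
  shows "factorizes ((concat (map B [0..<j]) @ p @ xs) \<frown> (q \<frown> g)) (B(j := p @ xs @ q))"
    (is "factorizes _ ?B")
proof -
  have "factorizes (concat (map B [0..<Suc j]) \<frown> g) B"
    using assms by simp
  then have "factorizes g (\<lambda>i. ?B (Suc j + i))" and nonempty: "\<And>i. 0 < i \<Longrightarrow> B i \<noteq> []"
    using factorizes_conc_iff[of "Suc j" B g] unfolding factorizes_def by auto
  moreover have "?B i \<noteq> []" if "0 < i" for i
    using that nonempty[of i] nonempty[of j] assms(2) by auto
  moreover have "map ?B [0..<j] = map B [0..<j]"
    by simp
  ultimately show ?thesis
    using factorizes_conc_iff[of "Suc j" ?B g] by simp
qed

lemma langD_pump_block:
  assumes "f \<in> langD A lam"
  shows "\<exists>x y z. f = x \<frown> (y \<frown> z) \<and> n \<le> length x \<and> y \<noteq> []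
    \<and> (\<forall>k. (x @ concat (replicate k y)) \<frown> z \<in> langD A lam)"
proof -
  obtain \<psi> B \<mu> where acc: "\<psi> \<in> qa_acc A" "norm \<psi> = 1" and fac: "factorizes f B"
    and "lam < \<mu>" and good: "\<And>j. \<mu> \<le> block_fidelity A \<psi> B j"
    using assms unfolding langD_iff_factorization by blast
  define x y where "x = concat (map B [0..<Suc n])" and "y = B (Suc n)"
  obtain z where f: "f = concat (map B [0..<Suc (Suc n)]) \<frown> z"
    using factorizes_drop_blocks[OF fac] by blast
  have "(x @ concat (replicate k y)) \<frown> z \<in> langD A lam" for k
  proof -
    define \<sigma> where "\<sigma> j = (if j < Suc n then j else if j < Suc n + k then Suc n else j + 1 - k)" for j
    have "factorizes (concat (map B [0..<Suc (Suc n)]) \<frown> z) B"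
      using fac f by (simp only:)
    then have "factorizes ((x @ concat (replicate k y)) \<frown> z) (B \<circ> \<sigma>)"
      unfolding x_def y_def \<sigma>_def by (rule factorizes_repeat_block) simp
    moreover have "block_fidelity A \<psi> (B \<circ> \<sigma>) j = block_fidelity A \<psi> B (\<sigma> j)" for j
      by (simp add: block_fidelity_def \<sigma>_def)
    ultimately show ?thesis
      unfolding langD_iff_factorization using acc \<open>lam < \<mu>\<close> good by metis
  qed
  moreover have "f = x \<frown> (y \<frown> z)"
    using f by (simp add: x_def y_def)
  moreover have "n \<le> length x"
    unfolding x_def by (rule length_concat_blocks[OF fac])
  moreover have "y \<noteq> []"
    using fac unfolding y_def factorizes_def by simp
  ultimately show ?thesis
    by blast
qed

(* Suc i: switching after block 0 would not do, since block 0 starts at the initial state. *)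
lemma langD_factorization_conc_iter:
  assumes wf: "qaut_wf A" and "lam < 1" and "v \<in> langD A lam"
  obtains B where "factorizes v B"
    and "\<And>i w. w \<noteq> [] \<Longrightarrow> concat (map B [0..<Suc i]) \<frown> w\<^sup>\<omega> \<in> langD A lam"
proof -
  obtain \<psi> B \<mu> where acc: "\<psi> \<in> qa_acc A" "norm \<psi> = 1" and fac: "factorizes v B"
    and "lam < \<mu>" and good: "\<And>j. \<mu> \<le> block_fidelity A \<psi> B j"
    using assms(3) unfolding langD_iff_factorization by blast
  have "concat (map B [0..<Suc i]) \<frown> w\<^sup>\<omega> \<in> langD A lam" if "w \<noteq> []" for i w
  proof -
    define \<delta> where "\<delta> = (1 - lam) / 4"
    obtain k where "0 < k" and close: "dist (word_mat A (concat (replicate k w)) *v \<psi>) \<psi> < \<delta>"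
      using word_mat_power_recurrent[OF wf, of \<delta> 0] \<open>lam < 1\<close> by (auto simp: \<delta>_def)
    define B' where "B' j = (if j < Suc i then B j else concat (replicate k w))" for j
    have "factorizes (concat (map B [0..<Suc i]) \<frown> w\<^sup>\<omega>) B'"
      unfolding B'_def using factorizes_conc_iter[OF fac \<open>w \<noteq> []\<close> \<open>0 < k\<close>] .
    moreover have "min \<mu> (1 - 2 * \<delta>) \<le> block_fidelity A \<psi> B' j" for j
    proof (cases "j < Suc i")
      case True
      then show ?thesis
        using good[of j] by (simp add: block_fidelity_def B'_def)
    next
      case False
      then have "block_fidelity A \<psi> B' j = fidelity \<psi> (word_mat A (concat (replicate k w)) *v \<psi>)"
        by (simp add: block_fidelity_def B'_def)
      then have "1 - 2 * \<delta> \<le> block_fidelity A \<psi> B' j"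
        using close fidelity_ge_one_minus_dist[OF acc(2), of "word_mat A (concat (replicate k w)) *v \<psi>"]
        by (simp add: norm_word_mat[OF wf] acc(2))
      then show ?thesis
        by (simp add: min_le_iff_disj)
    qed
    moreover have "lam < min \<mu> (1 - 2 * \<delta>)"
      using \<open>lam < \<mu>\<close> \<open>lam < 1\<close> by (simp add: \<delta>_def field_simps)
    ultimately show ?thesis
      unfolding langD_iff_factorization using acc by metis
  qed
  with fac that show ?thesis
    by blast
qed

lemma langD_prefix_conc_iter:
  assumes "qaut_wf A" and "lam < 1" and "v \<in> langD A lam"
  shows "infinite {m. \<forall>w. w \<noteq> [] \<longrightarrow> prefix m v \<frown> w\<^sup>\<omega> \<in> langD A lam}"
proof -
  obtain B where fac: "factorizes v B"
    and switch: "\<And>i w. w \<noteq> [] \<Longrightarrow> concat (map B [0..<Suc i]) \<frown> w\<^sup>\<omega> \<in> langD A lam"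
    using langD_factorization_conc_iter[OF assms] by blast
  define ends where "ends i = length (concat (map B [0..<Suc i]))" for i
  have "prefix (ends i) v = concat (map B [0..<Suc i])" for i
    using factorizes_drop_blocks[OF fac, of "Suc i"] unfolding ends_def by (metis prefix_conc_length)
  then have "prefix (ends i) v \<frown> w\<^sup>\<omega> \<in> langD A lam" if "w \<noteq> []" for i w
    using switch[OF that, of i] by (simp only:)
  then have "range ends \<subseteq> {m. \<forall>w. w \<noteq> [] \<longrightarrow> prefix m v \<frown> w\<^sup>\<omega> \<in> langD A lam}"
    by blast
  moreover have "infinite (range ends)"
    using cut_block_factorization(1)[OF fac] strict_mono_imp_inj_on range_inj_infinite
    unfolding ends_def by blast
  ultimately show ?thesis
    using infinite_super by blast
qed

lemma langD_insert_power:
  assumes wf: "qaut_wf A" and "u \<frown> v \<in> langD A lam"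
  shows "infinite {k. 0 < k \<and> (u @ concat (replicate k w)) \<frown> v \<in> langD A lam}"
proof -
  obtain \<psi> B \<mu> where acc: "\<psi> \<in> qa_acc A" "norm \<psi> = 1" and fac: "factorizes (u \<frown> v) B"
    and "lam < \<mu>" and good: "\<And>j. \<mu> \<le> block_fidelity A \<psi> B j"
    using assms(2) unfolding langD_iff_factorization by blast
  obtain j p q g where Bj: "B j = p @ q" and u: "u = concat (map B [0..<j]) @ p"
    and v: "v = q \<frown> g"
    using factorizes_split_at[OF fac, of "length u"] concat_eq by metis
  define y where "y = word_mat A p *v (if j = 0 then qa_init A else \<psi>)"
  define \<delta> where "\<delta> = (\<mu> - lam) / 4"
  have "\<exists>k>N. (u @ concat (replicate k w)) \<frown> v \<in> langD A lam" for N
  proof -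
    obtain k where "N < k" and close: "dist (word_mat A (concat (replicate k w)) *v y) y < \<delta>"
      using word_mat_power_recurrent[OF wf, of \<delta> N] \<open>lam < \<mu>\<close> by (auto simp: \<delta>_def)
    define B' where "B' = B(j := p @ concat (replicate k w) @ q)"
    have "factorizes ((u @ concat (replicate k w)) \<frown> v) B'"
      using factorizes_insert[of B j p q g "concat (replicate k w)"] fac Bj
      unfolding u v B'_def by simp
    moreover have "\<mu> - 2 * \<delta> \<le> block_fidelity A \<psi> B' i" for i
    proof (cases "i = j")
      case True
      then show ?thesis
        using block_fidelity_insert[of A \<psi> B j p q "concat (replicate k w)"] wf acc(2) Bj good[of j] close
        unfolding B'_def y_def by simp
    next
      case False
      then show ?thesis
        using good[of i] \<open>lam < \<mu>\<close> by (simp add: B'_def block_fidelity_def \<delta>_def field_simps)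
    qed
    moreover have "lam < \<mu> - 2 * \<delta>"
      using \<open>lam < \<mu>\<close> by (simp add: \<delta>_def field_simps)
    ultimately show ?thesis
      unfolding langD_iff_factorization using acc \<open>N < k\<close> by blast
  qed
  then show ?thesis
    unfolding infinite_nat_iff_unbounded by (metis (mono_tags) gr0I mem_Collect_eq not_less0)
qed

theorem theorem4:
  fixes A :: "('a::finite, 'n::finite) qaut" and lam :: real
  assumes "qaut_wf A" and "0 \<le> lam" and "lam < 1"
  defines "L \<equiv> langD A lam"
  shows "(\<forall>w u v. w \<noteq> [] \<longrightarrow> u \<frown> v \<in> L \<longrightarrow>
            infinite {k::nat. k > 0 \<and> (u @ concat (replicate k w)) \<frown> v \<in> L})
       \<and> (\<forall>v \<in> L. infinite {m::nat. \<forall>w. w \<noteq> [] \<longrightarrow> prefix m v \<frown> w\<^sup>\<omega> \<in> L})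
       \<and> (\<forall>n::nat. n > 0 \<longrightarrow> (\<forall>w \<in> L. \<exists>x y z. w = x \<frown> (y \<frown> z) \<and> length x \<ge> n \<and> length y \<ge> 1
            \<and> (\<forall>k::nat. (x @ concat (replicate k y)) \<frown> z \<in> L)))"
  unfolding L_def
proof (intro conjI allI impI ballI)
  fix w u :: "'a list" and v :: "'a word"
  assume "u \<frown> v \<in> langD A lam"
  then show "infinite {k. k > 0 \<and> (u @ concat (replicate k w)) \<frown> v \<in> langD A lam}"
    using langD_insert_power[OF assms(1)] by blast
next
  fix v :: "'a word"
  assume "v \<in> langD A lam"
  then show "infinite {m. \<forall>w. w \<noteq> [] \<longrightarrow> prefix m v \<frown> w\<^sup>\<omega> \<in> langD A lam}"
    by (rule langD_prefix_conc_iter[OF assms(1,3)])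
next
  fix n :: nat and w :: "'a word"
  assume "w \<in> langD A lam"
  then show "\<exists>x y z. w = x \<frown> (y \<frown> z) \<and> length x \<ge> n \<and> length y \<ge> 1
      \<and> (\<forall>k. (x @ concat (replicate k y)) \<frown> z \<in> langD A lam)"
    using langD_pump_block[of w A lam n] by (metis length_greater_0_conv less_eq_Suc_le One_nat_def)
qed

end
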